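(* Let $\mathbb{R}^n$ carry the Euclidean norm $\|\cdot\|$ (which is its own dual), let $Q\subseteq\mathbb{R}^n$ be closed convex, and let $f:Q\to\mathbb{R}$ admit a stochastic $(\delta,L)$-oracle with parameter $D>0$. Let $(f_\delta(y),\nabla f_\delta(y;\xi_i))$, $i=1,\dots,m$, be $m$ independent outputs of this oracle, let $x,y\in Q$ be random vectors with $y$ independent of $\xi_1,\dots,\xi_m$, let $\tilde L$ be a random constant with $\tilde L\ge\frac32L$, and let $\Omega\ge\sqrt2-1$. Set $\tilde\nabla^m f_\delta(y)=\frac1m\sum_{j=1}^m\nabla f_\delta(y;\xi_j)$. Then $$\mathbb{P}\Big(f_\delta(x)-f_\delta(y)-\langle\tilde\nabla^mf_\delta(y),x-y\rangle>(1+2\Omega+\Omega^2)\frac{3D}{\tilde Lm}+\frac{\tilde L}2\|x-y\|^2+\delta\Big)\le\exp(-\Omega^2/2).$$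
   Context: A stochastic $(\delta,L)$-oracle for $f$ returns for each query $y\in Q$ a pair $(f_\delta(y),\nabla f_\delta(y;\xi))$ (with $\xi$ random) such that there is a vector $\nabla f_\delta(y)$ with: $0\le f(x)-f_\delta(y)-\langle\nabla f_\delta(y),x-y\rangle\le\frac L2\|x-y\|^2+\delta$ for all $x\in Q$; $\mathbb{E}\nabla f_\delta(y;\xi)=\nabla f_\delta(y)$; and $\mathbb{E}\exp\big(\|\nabla f_\delta(y;\xi)-\nabla f_\delta(y)\|^2/D\big)\le\exp(1)$, for all $y\in Q$. *)

theory Defs
  imports "HOL-Probability.Probability"
begin

text \<open>The randomness xi of the model has law mu
  (a probability measure on the noise space); the model returns the pair
  (fd y, G y xi).  The vector gd y plays the role of the (unknown) vector
  nabla f_delta(y) in the definition.\<close>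
definition stoch_oracle ::
  "('n::finite) itself \<Rightarrow> (real^'n) set \<Rightarrow> (real^'n \<Rightarrow> real) \<Rightarrow> real \<Rightarrow> real \<Rightarrow> real \<Rightarrow>
   'x measure \<Rightarrow> (real^'n \<Rightarrow> real) \<Rightarrow> (real^'n \<Rightarrow> 'x \<Rightarrow> real^'n) \<Rightarrow> bool" where
  "stoch_oracle _ Q f \<delta> L D \<mu> fd G \<longleftrightarrow>
     (\<exists>gd :: real^'n \<Rightarrow> real^'n. \<forall>y\<in>Q.
        (\<forall>x\<in>Q. 0 \<le> f x - fd y - inner (gd y) (x - y)
               \<and> f x - fd y - inner (gd y) (x - y) \<le> L / 2 * (norm (x - y))\<^sup>2 + \<delta>)
      \<and> integrable \<mu> (G y)
      \<and> (\<integral>\<xi>. G y \<xi> \<partial>\<mu>) = gd y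
      \<and> (\<integral>\<^sup>+\<xi>. ennreal (exp ((norm (G y \<xi> - gd y))\<^sup>2 / D)) \<partial>\<mu>) \<le> ennreal (exp 1))"

end

theory Submission
  imports Defs
begin

(* On the event in question the upper model bound, Cauchy-Schwarz and Young's inequality with
   the slack Lt - L >= Lt/3 force the noise sum  S = sum_j (G y xi_j - E G y)  to satisfy
   |S|^2 > 2 (1 + Omega)^2 D m.  Given y, the summands are i.i.d., centred and satisfy
   E exp(|h|^2/D) <= e, hence are sub-Gaussian in every direction.  Expanding |s + h|^2 gives the
   one-step bound  E exp(|s + h|^2/a) <= exp(D/(c a)) exp(|s|^2/(a - 18/5 D)),  where
   c = 13/18 - lb for a free parameter lb, and iterating it over the m summands bounds
   E exp(|S|^2/a).  A Chernoff bound at the scale a = rho D m, with numerically chosen lb and rho,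
   yields exp(-Omega^2/2); independence of y lets one integrate this bound over the law of y. *)

lemma mult_le_sq_div_add:
  fixes x y c :: real
  assumes "c > 0"
  shows "x * y \<le> x\<^sup>2 / (2 * c) + c / 2 * y\<^sup>2"
proof -
  have "0 \<le> (x - c * y)\<^sup>2 / (2 * c)"
    using assms by simp
  also have "\<dots> = x\<^sup>2 / (2 * c) - x * y + c / 2 * y\<^sup>2"
    using assms by (simp add: power2_eq_square field_simps)
  finally show ?thesis
    by linarith
qed

lemma exp_one_third_le: "exp (1/3::real) \<le> 3/2"
proof -
  have "2/3 \<le> exp (-1/3::real)"
    using exp_ge_add_one_self[of "-1/3::real"] by simp
  moreover have "exp (1/3::real) * exp (-1/3) = 1"
    by (simp add: exp_add[symmetric])
  moreover have "2/3 * exp (1/3::real) \<le> exp (-1/3) * exp (1/3)"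
    using \<open>2/3 \<le> exp (-1/3::real)\<close> by (intro mult_right_mono) auto
  ultimately show ?thesis
    by (simp add: mult.commute)
qed

lemma exp_le_add_exp_sq: "exp (x::real) \<le> x + exp (3/4 * x\<^sup>2)"
proof -
  define g' where "g' t = 1 + 3/2 * t * exp (3/4 * t\<^sup>2) - exp t" for t :: real
  define g where "g t = t + exp (3/4 * t\<^sup>2) - exp t" for t :: real
  have g''_nonneg: "exp t \<le> 3/2 * exp (3/4 * t\<^sup>2) * (1 + 3/2 * t\<^sup>2)" for t :: real
  proof -
    have "t - 3/4 * t\<^sup>2 \<le> 1/3"
      using sum_squares_ge_zero[of "t - 2/3" 0] by (simp add: power2_eq_square algebra_simps)
    then have "exp (t - 3/4 * t\<^sup>2) \<le> 3/2"
      using exp_one_third_le by (meson exp_le_cancel_iff order_trans)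
    then have "exp t \<le> 3/2 * exp (3/4 * t\<^sup>2)"
      by (smt (verit) exp_diff exp_gt_zero divide_le_eq mult.commute)
    also have "\<dots> \<le> 3/2 * exp (3/4 * t\<^sup>2) * (1 + 3/2 * t\<^sup>2)"
      by (simp add: zero_le_power2)
    finally show ?thesis .
  qed
  have d': "DERIV g' t :> 3/2 * exp (3/4 * t\<^sup>2) * (1 + 3/2 * t\<^sup>2) - exp t" for t
    unfolding g'_def by (auto intro!: derivative_eq_intros simp: power2_eq_square algebra_simps)
  have d: "DERIV g t :> g' t" for t
    unfolding g_def g'_def by (auto intro!: derivative_eq_intros simp: power2_eq_square algebra_simps)
  have g'_mono: "g' a \<le> g' b" if "a \<le> b" for a b
    by (rule DERIV_nonneg_imp_nondecreasing[OF that]) (use d' g''_nonneg in force)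
  have "g' 0 = 0"
    by (simp add: g'_def)
  \<comment> \<open>g is convex with g'(0) = 0, hence minimal at 0, where it vanishes\<close>
  have "g 0 \<le> g x"
  proof (cases "x \<ge> 0")
    case True
    show ?thesis
      by (rule DERIV_nonneg_imp_nondecreasing[OF True]) (use d g'_mono \<open>g' 0 = 0\<close> in force)
  next
    case False
    show ?thesis
      by (rule DERIV_nonpos_imp_nonincreasing[of x 0]) (use False d g'_mono \<open>g' 0 = 0\<close> in force)+
  qed
  then show ?thesis
    by (simp add: g_def)
qed

lemma x_add_exp_sq_nonneg: "0 \<le> (x::real) + exp (3/4 * x\<^sup>2)"
  using exp_le_add_exp_sq[of x] exp_gt_zero[of x] by linarith

lemma exp_le_one_add_mult_exp: "exp (b::real) \<le> 1 + b * exp b"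
proof -
  have "(1 - b) * exp b \<le> exp (-b) * exp b"
    using exp_ge_add_one_self[of "-b"] by (intro mult_right_mono) auto
  then show ?thesis
    by (simp add: exp_minus algebra_simps)
qed

lemma mult_exp_neg_le:
  assumes "c > (0::real)"
  shows "y * exp (- c * y) \<le> 1 / (c * exp 1)"
proof -
  have "c * y \<le> exp (c * y) / exp 1"
    using exp_ge_add_one_self[of "c * y - 1"] by (simp add: exp_diff)
  then have "c * y * exp (- c * y) \<le> exp (c * y) / exp 1 * exp (- c * y)"
    by (intro mult_right_mono) auto
  also have "\<dots> = 1 / exp 1"
    by (simp add: exp_minus field_simps)
  finally show ?thesis
    using assms by (simp add: field_simps)
qed

lemma (in prob_space) nn_integral_exp_mult_le:
  assumes [measurable]: "V \<in> borel_measurable M" and p: "0 \<le> p" "p \<le> 1"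
    and bound: "(\<integral>\<^sup>+x. ennreal (exp (V x)) \<partial>M) \<le> ennreal (exp K)"
  shows "(\<integral>\<^sup>+x. ennreal (exp (p * V x)) \<partial>M) \<le> ennreal (exp (p * K))"
proof -
  define A where "A = exp (p * K) * (1 - p)"
  define C where "C = p * exp (p * K - K)"
  have "A \<ge> 0" "C \<ge> 0"
    using p by (auto simp: A_def C_def)
  have pointwise: "exp (p * V x) \<le> A + C * exp (V x)" for x
  proof -
    have "exp (p * V x) = exp (p * K) * exp (p * (V x - K))"
      by (simp add: exp_add[symmetric] algebra_simps)
    also have "\<dots> \<le> exp (p * K) * ((1 - p) + p * exp (V x - K))"
      using convex_onD[OF exp_convex, of p 0 "V x - K"] p by simp
    also have "\<dots> = A + C * exp (V x)"
      by (simp add: A_def C_def algebra_simps exp_diff exp_add)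
    finally show ?thesis .
  qed
  have "(\<integral>\<^sup>+x. ennreal (exp (p * V x)) \<partial>M) \<le> (\<integral>\<^sup>+x. ennreal A + ennreal C * ennreal (exp (V x)) \<partial>M)"
    using pointwise \<open>A \<ge> 0\<close> \<open>C \<ge> 0\<close>
    by (intro nn_integral_mono) (simp add: ennreal_plus[symmetric] ennreal_mult[symmetric] del: ennreal_plus)
  also have "\<dots> = ennreal A + ennreal C * (\<integral>\<^sup>+x. ennreal (exp (V x)) \<partial>M)"
    by (subst nn_integral_add) (auto simp: nn_integral_cmult emeasure_space_1)
  also have "\<dots> \<le> ennreal A + ennreal C * ennreal (exp K)"
    using bound by (intro add_left_mono mult_left_mono) auto
  also have "\<dots> = ennreal (A + C * exp K)"
    using \<open>A \<ge> 0\<close> \<open>C \<ge> 0\<close> by (simp add: ennreal_mult)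
  also have "A + C * exp K = exp (p * K)"
    by (simp add: A_def C_def exp_diff algebra_simps)
  finally show ?thesis .
qed

text \<open>For small \<open>|t| \<sigma>\<close> integrate \<open>exp x \<le> x + exp (3/4 x\<^sup>2)\<close>, using that \<open>w\<close> is centred;
  for large \<open>|t| \<sigma>\<close> use Young's inequality \<open>t w \<le> 5/12 t\<^sup>2 \<sigma>\<^sup>2 + 3/5 w\<^sup>2 / \<sigma>\<^sup>2\<close>.\<close>
lemma (in prob_space) subgaussian_mgf_le:
  assumes w[measurable]: "w \<in> borel_measurable M" and int: "integrable M w"
    and centred: "expectation w = 0" and \<sigma>: "\<sigma> > 0"
    and bound: "(\<integral>\<^sup>+x. ennreal (exp ((w x)\<^sup>2 / \<sigma>\<^sup>2)) \<partial>M) \<le> ennreal (exp 1)"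
  shows "(\<integral>\<^sup>+x. ennreal (exp (t * w x)) \<partial>M) \<le> ennreal (exp (9/10 * t\<^sup>2 * \<sigma>\<^sup>2))"
proof (cases "3/4 * t\<^sup>2 * \<sigma>\<^sup>2 \<le> 1")
  case True
  define p where "p = 3/4 * t\<^sup>2 * \<sigma>\<^sup>2"
  have "(\<integral>\<^sup>+x. ennreal (exp (p * ((w x)\<^sup>2 / \<sigma>\<^sup>2))) \<partial>M) \<le> ennreal (exp (p * 1))"
    by (rule nn_integral_exp_mult_le) (use True bound in \<open>auto simp: p_def\<close>)
  moreover have rescale: "p * ((w x)\<^sup>2 / \<sigma>\<^sup>2) = 3/4 * (t * w x)\<^sup>2" for x
    using \<sigma> by (simp add: p_def power_mult_distrib field_simps)
  ultimately have sq_bound: "(\<integral>\<^sup>+x. ennreal (exp (3/4 * (t * w x)\<^sup>2)) \<partial>M) \<le> ennreal (exp p)"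
    by (simp only: rescale mult_1_right)
  then have sq_int: "integrable M (\<lambda>x. exp (3/4 * (t * w x)\<^sup>2))"
    by (intro integrableI_bounded) (auto simp: order_le_less_trans)
  have "(\<integral>\<^sup>+x. ennreal (exp (t * w x)) \<partial>M)
      \<le> (\<integral>\<^sup>+x. ennreal (t * w x + exp (3/4 * (t * w x)\<^sup>2)) \<partial>M)"
    by (intro nn_integral_mono ennreal_leI exp_le_add_exp_sq)
  also have "\<dots> = ennreal (\<integral>x. t * w x + exp (3/4 * (t * w x)\<^sup>2) \<partial>M)"
    using int sq_int x_add_exp_sq_nonneg by (intro nn_integral_eq_integral) auto
  also have "(\<integral>x. t * w x + exp (3/4 * (t * w x)\<^sup>2) \<partial>M) = (\<integral>x. exp (3/4 * (t * w x)\<^sup>2) \<partial>M)"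
    using int sq_int centred by simp
  also have "ennreal \<dots> = (\<integral>\<^sup>+x. ennreal (exp (3/4 * (t * w x)\<^sup>2)) \<partial>M)"
    using sq_int by (intro nn_integral_eq_integral[symmetric]) auto
  also have "\<dots> \<le> ennreal (exp (9/10 * t\<^sup>2 * \<sigma>\<^sup>2))"
    using sq_bound by (rule order_trans) (auto simp: p_def)
  finally show ?thesis .
next
  case False
  have young: "t * w x \<le> 5/12 * t\<^sup>2 * \<sigma>\<^sup>2 + 3/5 * ((w x)\<^sup>2 / \<sigma>\<^sup>2)" for x
  proof -
    have "w x / \<sigma> * (t * \<sigma>) \<le> (w x / \<sigma>)\<^sup>2 / (2 * (5/6)) + 5/6 / 2 * (t * \<sigma>)\<^sup>2"
      by (rule mult_le_sq_div_add) simp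
    moreover have "w x / \<sigma> * (t * \<sigma>) = t * w x"
      using \<sigma> by simp
    moreover have "(w x / \<sigma>)\<^sup>2 / (2 * (5/6)) = 3/5 * ((w x)\<^sup>2 / \<sigma>\<^sup>2)"
      by (simp add: power_divide)
    moreover have "5/6 / 2 * (t * \<sigma>)\<^sup>2 = 5/12 * t\<^sup>2 * \<sigma>\<^sup>2"
      by (simp add: power_mult_distrib)
    ultimately show ?thesis
      by linarith
  qed
  have "(\<integral>\<^sup>+x. ennreal (exp (t * w x)) \<partial>M)
      \<le> (\<integral>\<^sup>+x. ennreal (exp (5/12 * t\<^sup>2 * \<sigma>\<^sup>2)) * ennreal (exp (3/5 * ((w x)\<^sup>2 / \<sigma>\<^sup>2))) \<partial>M)"
    using young by (intro nn_integral_mono) (simp add: ennreal_mult[symmetric] exp_add[symmetric])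
  also have "\<dots> = ennreal (exp (5/12 * t\<^sup>2 * \<sigma>\<^sup>2)) * (\<integral>\<^sup>+x. ennreal (exp (3/5 * ((w x)\<^sup>2 / \<sigma>\<^sup>2))) \<partial>M)"
    by (rule nn_integral_cmult) auto
  also have "\<dots> \<le> ennreal (exp (5/12 * t\<^sup>2 * \<sigma>\<^sup>2)) * ennreal (exp (3/5 * 1))"
    by (intro mult_left_mono nn_integral_exp_mult_le) (use bound in auto)
  also have "\<dots> \<le> ennreal (exp (9/10 * t\<^sup>2 * \<sigma>\<^sup>2))"
  proof -
    have "5/12 * t\<^sup>2 * \<sigma>\<^sup>2 + 3/5 \<le> 9/10 * t\<^sup>2 * \<sigma>\<^sup>2"
      using False by linarith
    then show ?thesis
      by (simp add: ennreal_mult[symmetric] exp_add[symmetric])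
  qed
  finally show ?thesis .
qed

text \<open>Expand the square and linearise \<open>exp (lam \<parallel>u\<parallel>\<^sup>2)\<close> by \<open>exp b \<le> 1 + b exp b\<close>: the cross term
  \<open>exp (2 lam \<langle>s, u\<rangle>)\<close> is left for the sub-Gaussian bound, while in the remainder Young's inequality and
  \<open>v exp (- c v) \<le> 1 / (c e)\<close> trade everything for \<open>exp (\<parallel>u\<parallel>\<^sup>2 / D)\<close>.\<close>
lemma exp_norm_sq_add_le:
  fixes s u :: "'a::real_inner"
  assumes D: "D > 0" and lam: "lam > 0" "lam * D \<le> lb" and lb: "lb < 13/18"
  shows "exp (lam * (norm (s + u))\<^sup>2)
    \<le> exp (lam * (norm s)\<^sup>2) * (exp (2 * lam * inner s u)
        + exp (18/5 * lam\<^sup>2 * (norm s)\<^sup>2 * D) * (lam * D / ((13/18 - lb) * exp 1)) * exp ((norm u)\<^sup>2 / D))"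
proof -
  define v where "v = (norm u)\<^sup>2"
  define x where "x = 2 * lam * inner s u"
  define z where "z = 18/5 * lam\<^sup>2 * (norm s)\<^sup>2 * D"
  define q where "q = 13/18 - lam * D"
  have "v \<ge> 0"
    by (simp add: v_def)
  have q: "0 < q" "13/18 - lb \<le> q"
    using lam lb by (auto simp: q_def)
  have "x \<le> norm u * (2 * lam * norm s)"
    using mult_left_mono[OF norm_cauchy_schwarz[of s u], of "2 * lam"] lam by (simp add: x_def ac_simps)
  also have "\<dots> \<le> (norm u)\<^sup>2 / (2 * (9/5 * D)) + 9/5 * D / 2 * (2 * lam * norm s)\<^sup>2"
    using D by (intro mult_le_sq_div_add) simp
  finally have young: "x \<le> z + 5/18 * v / D"
    by (simp add: v_def z_def power_mult_distrib algebra_simps)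
  have exponent: "z + 5/18 * v / D + lam * v = z + - (q / D) * v + v / D"
    using D unfolding q_def by (simp add: field_simps)
  have "exp x * (lam * v) * exp (lam * v) \<le> exp (z + 5/18 * v / D) * (lam * v) * exp (lam * v)"
    using young \<open>v \<ge> 0\<close> lam by (intro mult_right_mono) auto
  also have "\<dots> = (exp (z + 5/18 * v / D) * exp (lam * v)) * (lam * v)"
    by (simp add: ac_simps)
  also have "\<dots> = exp z * exp (- (q / D) * v) * exp (v / D) * (lam * v)"
    by (simp only: exp_add[symmetric] exponent)
  also have "\<dots> = exp z * lam * (v * exp (- (q / D) * v)) * exp (v / D)"
    by (simp add: ac_simps)
  also have "\<dots> \<le> exp z * lam * (D / ((13/18 - lb) * exp 1)) * exp (v / D)"
  proof -
    have "v * exp (- (q / D) * v) \<le> D / (q * exp 1)"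
      using mult_exp_neg_le[of "q / D" v] q D by simp
    also have "\<dots> \<le> D / ((13/18 - lb) * exp 1)"
      using q D lb by (intro divide_left_mono mult_right_mono) auto
    finally show ?thesis
      using lam by (intro mult_right_mono mult_left_mono) auto
  qed
  finally have bound: "exp x * exp (lam * v) \<le> exp x + exp z * (lam * D / ((13/18 - lb) * exp 1)) * exp (v / D)"
    using mult_left_mono[OF exp_le_one_add_mult_exp[of "lam * v"], of "exp x"]
    by (simp add: algebra_simps)
  have "(norm (s + u))\<^sup>2 = (norm s)\<^sup>2 + 2 * inner s u + v"
    by (simp add: v_def power2_norm_eq_inner inner_add inner_commute)
  then have "exp (lam * (norm (s + u))\<^sup>2) = exp (lam * (norm s)\<^sup>2) * (exp x * exp (lam * v))"
    by (simp add: x_def exp_add[symmetric] algebra_simps)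
  also have "\<dots> \<le> exp (lam * (norm s)\<^sup>2) * (exp x + exp z * (lam * D / ((13/18 - lb) * exp 1)) * exp (v / D))"
    using bound by (intro mult_left_mono) auto
  finally show ?thesis
    by (simp only: x_def z_def v_def)
qed

lemma (in prob_space) nn_integral_exp_inner_le:
  fixes h :: "'a \<Rightarrow> 'b::euclidean_space"
  assumes [measurable]: "h \<in> borel_measurable M" and "integrable M h" and "(\<integral>\<xi>. h \<xi> \<partial>M) = 0"
    and D: "D > 0" and bound: "(\<integral>\<^sup>+\<xi>. ennreal (exp ((norm (h \<xi>))\<^sup>2 / D)) \<partial>M) \<le> ennreal (exp 1)"
  shows "(\<integral>\<^sup>+\<xi>. ennreal (exp (t * inner s (h \<xi>))) \<partial>M) \<le> ennreal (exp (9/10 * t\<^sup>2 * (norm s)\<^sup>2 * D))"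
proof (cases "s = 0")
  case True
  then show ?thesis
    by (simp add: emeasure_space_1)
next
  case False
  define \<sigma> where "\<sigma> = norm s * sqrt D"
  have \<sigma>: "\<sigma> > 0" "\<sigma>\<^sup>2 = (norm s)\<^sup>2 * D"
    using False D by (auto simp: \<sigma>_def power_mult_distrib)
  have "(\<integral>\<^sup>+\<xi>. ennreal (exp ((inner s (h \<xi>))\<^sup>2 / \<sigma>\<^sup>2)) \<partial>M)
      \<le> (\<integral>\<^sup>+\<xi>. ennreal (exp ((norm (h \<xi>))\<^sup>2 / D)) \<partial>M)"
  proof (intro nn_integral_mono ennreal_leI exp_mono)
    fix \<xi>
    have "(inner s (h \<xi>))\<^sup>2 \<le> (norm s)\<^sup>2 * (norm (h \<xi>))\<^sup>2"
      using Cauchy_Schwarz_ineq[of s "h \<xi>"] by (simp add: power2_norm_eq_inner)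
    then have "(inner s (h \<xi>))\<^sup>2 / \<sigma>\<^sup>2 \<le> (norm s)\<^sup>2 * (norm (h \<xi>))\<^sup>2 / ((norm s)\<^sup>2 * D)"
      unfolding \<sigma>(2) using D by (intro divide_right_mono) auto
    also have "\<dots> = (norm (h \<xi>))\<^sup>2 / D"
      using False by simp
    finally show "(inner s (h \<xi>))\<^sup>2 / \<sigma>\<^sup>2 \<le> (norm (h \<xi>))\<^sup>2 / D" .
  qed
  also have "\<dots> \<le> ennreal (exp 1)"
    by (rule bound)
  finally have "(\<integral>\<^sup>+\<xi>. ennreal (exp (t * inner s (h \<xi>))) \<partial>M) \<le> ennreal (exp (9/10 * t\<^sup>2 * \<sigma>\<^sup>2))"
    using assms \<sigma> by (intro subgaussian_mgf_le) auto
  then show ?thesis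
    by (simp add: \<sigma> mult.assoc)
qed

lemma divide_add_mult_divide_sq_le:
  fixes a c x :: real
  assumes "0 \<le> c" and "0 \<le> x" and "x = 0 \<or> c < a"
  shows "x / a + c * x / a\<^sup>2 \<le> x / (a - c)"
proof (cases "x = 0")
  case False
  then have "c < a"
    using assms(3) by simp
  have "(a + c) * (a - c) \<le> a * a"
    by (simp add: algebra_simps)
  then have "1 / a + c / a\<^sup>2 \<le> 1 / (a - c)"
    using assms(1) \<open>c < a\<close> by (simp add: power2_eq_square field_simps)
  then have "(1 / a + c / a\<^sup>2) * x \<le> 1 / (a - c) * x"
    using assms(2) by (rule mult_right_mono)
  then show ?thesis
    by (simp add: distrib_right)
qed simp

lemma (in prob_space) nn_integral_exp_norm_sq_add_le:
  fixes h :: "'a \<Rightarrow> 'b::euclidean_space"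
  assumes [measurable]: "h \<in> borel_measurable M" and "integrable M h" and "(\<integral>\<xi>. h \<xi> \<partial>M) = 0"
    and D: "D > 0" and bound: "(\<integral>\<^sup>+\<xi>. ennreal (exp ((norm (h \<xi>))\<^sup>2 / D)) \<partial>M) \<le> ennreal (exp 1)"
    and lb: "0 < lb" "lb < 13/18" and a: "D / lb \<le> a" and s: "s = 0 \<or> 18/5 * D < a"
  shows "(\<integral>\<^sup>+\<xi>. ennreal (exp ((norm (s + h \<xi>))\<^sup>2 / a)) \<partial>M)
    \<le> ennreal (exp (D / ((13/18 - lb) * a) + (norm s)\<^sup>2 / (a - 18/5 * D)))"
proof -
  define lam where "lam = 1 / a"
  have "a > 0"
    using divide_pos_pos[OF D lb(1)] a by linarith
  then have lam: "lam > 0" "lam * D \<le> lb"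
    using a lb by (auto simp: lam_def field_simps)
  define A where "A = exp (lam * (norm s)\<^sup>2)"
  define B where "B = A * exp (18/5 * lam\<^sup>2 * (norm s)\<^sup>2 * D) * (lam * D / ((13/18 - lb) * exp 1))"
  have "A \<ge> 0" "B \<ge> 0"
    using lam D lb by (auto simp: A_def B_def)
  have pointwise: "exp (lam * (norm (s + u))\<^sup>2) \<le> A * exp (2 * lam * inner s u) + B * exp ((norm u)\<^sup>2 / D)" for u
    using exp_norm_sq_add_le[OF D lam lb(2), of s u] by (simp only: A_def B_def distrib_left mult.assoc)
  have "(\<integral>\<^sup>+\<xi>. ennreal (exp ((norm (s + h \<xi>))\<^sup>2 / a)) \<partial>M)
      \<le> (\<integral>\<^sup>+\<xi>. ennreal A * ennreal (exp (2 * lam * inner s (h \<xi>)))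
               + ennreal B * ennreal (exp ((norm (h \<xi>))\<^sup>2 / D)) \<partial>M)"
  proof (intro nn_integral_mono)
    fix \<xi>
    have "ennreal (exp ((norm (s + h \<xi>))\<^sup>2 / a))
        \<le> ennreal (A * exp (2 * lam * inner s (h \<xi>)) + B * exp ((norm (h \<xi>))\<^sup>2 / D))"
      using pointwise[of "h \<xi>"] by (intro ennreal_leI) (simp add: lam_def)
    then show "ennreal (exp ((norm (s + h \<xi>))\<^sup>2 / a))
        \<le> ennreal A * ennreal (exp (2 * lam * inner s (h \<xi>))) + ennreal B * ennreal (exp ((norm (h \<xi>))\<^sup>2 / D))"
      using \<open>A \<ge> 0\<close> \<open>B \<ge> 0\<close> by (simp add: ennreal_plus ennreal_mult)
  qed
  also have "\<dots> = ennreal A * (\<integral>\<^sup>+\<xi>. ennreal (exp (2 * lam * inner s (h \<xi>))) \<partial>M)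
      + ennreal B * (\<integral>\<^sup>+\<xi>. ennreal (exp ((norm (h \<xi>))\<^sup>2 / D)) \<partial>M)"
    by (subst nn_integral_add) (auto simp: nn_integral_cmult)
  also have "\<dots> \<le> ennreal A * ennreal (exp (9/10 * (2 * lam)\<^sup>2 * (norm s)\<^sup>2 * D)) + ennreal B * ennreal (exp 1)"
    using assms by (intro add_mono mult_left_mono nn_integral_exp_inner_le) auto
  also have "\<dots> = ennreal (A * exp (9/10 * (2 * lam)\<^sup>2 * (norm s)\<^sup>2 * D) + B * exp 1)"
    using \<open>A \<ge> 0\<close> \<open>B \<ge> 0\<close> by (simp add: ennreal_plus ennreal_mult)
  also have "A * exp (9/10 * (2 * lam)\<^sup>2 * (norm s)\<^sup>2 * D) + B * exp 1
      = A * exp (18/5 * lam\<^sup>2 * (norm s)\<^sup>2 * D) * (1 + lam * D / (13/18 - lb))"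
  proof -
    have "9/10 * (2 * lam)\<^sup>2 * (norm s)\<^sup>2 * D = 18/5 * lam\<^sup>2 * (norm s)\<^sup>2 * D"
      by (simp add: power_mult_distrib)
    moreover have "B * exp 1 = A * exp (18/5 * lam\<^sup>2 * (norm s)\<^sup>2 * D) * (lam * D / (13/18 - lb))"
      by (simp add: B_def)
    ultimately show ?thesis
      by (simp add: distrib_left)
  qed
  also have "\<dots> \<le> ennreal (exp (lam * (norm s)\<^sup>2 + 18/5 * lam\<^sup>2 * (norm s)\<^sup>2 * D + lam * D / (13/18 - lb)))"
    using exp_ge_add_one_self[of "lam * D / (13/18 - lb)"]
    by (intro ennreal_leI) (simp add: A_def exp_add mult_left_mono)
  also have "\<dots> \<le> ennreal (exp (D / ((13/18 - lb) * a) + (norm s)\<^sup>2 / (a - 18/5 * D)))"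
  proof (intro ennreal_leI exp_mono)
    have "lam * (norm s)\<^sup>2 = (norm s)\<^sup>2 / a" "lam * D / (13/18 - lb) = D / ((13/18 - lb) * a)"
      and "18/5 * lam\<^sup>2 * (norm s)\<^sup>2 * D = 18/5 * D * (norm s)\<^sup>2 / a\<^sup>2"
      by (simp_all add: lam_def power_one_over)
    then show "lam * (norm s)\<^sup>2 + 18/5 * lam\<^sup>2 * (norm s)\<^sup>2 * D + lam * D / (13/18 - lb)
        \<le> D / ((13/18 - lb) * a) + (norm s)\<^sup>2 / (a - 18/5 * D)"
      using divide_add_mult_divide_sq_le[of "18/5 * D" "(norm s)\<^sup>2" a] s D by simp
  qed
  finally show ?thesis .
qed

lemma (in prob_space) nn_integral_exp_norm_sq_sum_insert_le:
  fixes h :: "'a \<Rightarrow> 'b::euclidean_space" and z :: "'i \<Rightarrow> 'a"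
  assumes [measurable]: "h \<in> borel_measurable M" and "integrable M h" and "(\<integral>\<xi>. h \<xi> \<partial>M) = 0"
    and D: "D > 0" and "(\<integral>\<^sup>+\<xi>. ennreal (exp ((norm (h \<xi>))\<^sup>2 / D)) \<partial>M) \<le> ennreal (exp 1)"
    and lb: "0 < lb" "lb < 13/18" and I: "finite I" "i \<notin> I"
    and a: "18/5 * D * real (card I) + D / lb \<le> a"
  shows "(\<integral>\<^sup>+y. ennreal (exp ((norm (\<Sum>j\<in>insert i I. h ((z(i := y)) j)))\<^sup>2 / a)) \<partial>M)
    \<le> ennreal (exp (D / ((13/18 - lb) * a))) * ennreal (exp ((norm (\<Sum>j\<in>I. h (z j)))\<^sup>2 / (a - 18/5 * D)))"
proof -
  define s where "s = (\<Sum>j\<in>I. h (z j))"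
  have sum_insert: "(\<Sum>j\<in>insert i I. h ((z(i := y)) j)) = s + h y" for y
  proof -
    have "(\<Sum>j\<in>I. h ((z(i := y)) j)) = s"
      unfolding s_def using I by (intro sum.cong) auto
    then show ?thesis
      using I by (simp add: add.commute)
  qed
  have "D / lb > 0"
    using D lb by simp
  moreover have "0 \<le> 18/5 * D * real (card I)"
    using D by simp
  ultimately have "D / lb \<le> a"
    using a by linarith
  have "s = 0 \<or> 18/5 * D < a"
  proof (cases "I = {}")
    case False
    then have "real (card I) \<ge> 1"
      using I card_gt_0_iff[of I] by simp
    then have "18/5 * D * 1 \<le> 18/5 * D * real (card I)"
      using D by (intro mult_left_mono) auto
    then show ?thesis
      using a \<open>D / lb > 0\<close> by linarith
  qed (simp add: s_def)
  have "(\<integral>\<^sup>+y. ennreal (exp ((norm (\<Sum>j\<in>insert i I. h ((z(i := y)) j)))\<^sup>2 / a)) \<partial>M)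
      = (\<integral>\<^sup>+y. ennreal (exp ((norm (s + h y))\<^sup>2 / a)) \<partial>M)"
    by (simp only: sum_insert)
  also have "\<dots> \<le> ennreal (exp (D / ((13/18 - lb) * a) + (norm s)\<^sup>2 / (a - 18/5 * D)))"
    by (rule nn_integral_exp_norm_sq_add_le[OF assms(1-5) lb \<open>D / lb \<le> a\<close> \<open>s = 0 \<or> 18/5 * D < a\<close>])
  finally show ?thesis
    by (simp add: s_def exp_add ennreal_mult)
qed

lemma PiM_nn_integral_exp_norm_sq_sum_le:
  fixes h :: "'a \<Rightarrow> 'b::euclidean_space"
  assumes "prob_space \<mu>" and h[measurable]: "h \<in> borel_measurable \<mu>" and "integrable \<mu> h"
    and "(\<integral>\<xi>. h \<xi> \<partial>\<mu>) = 0" and D: "D > 0"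
    and "(\<integral>\<^sup>+\<xi>. ennreal (exp ((norm (h \<xi>))\<^sup>2 / D)) \<partial>\<mu>) \<le> ennreal (exp 1)"
    and lb: "0 < lb" "lb < 13/18" and "finite I"
    and "18/5 * D * (real (card I) - 1) + D / lb \<le> a"
  shows "(\<integral>\<^sup>+z. ennreal (exp ((norm (\<Sum>j\<in>I. h (z j)))\<^sup>2 / a)) \<partial>PiM I (\<lambda>_. \<mu>))
    \<le> ennreal (exp (D * real (card I) / ((13/18 - lb) * (a - 18/5 * D * (real (card I) - 1)))))"
  using \<open>finite I\<close> \<open>_ \<le> a\<close>
proof (induction I arbitrary: a rule: finite_induct)
  case empty
  interpret prob_space "PiM {} (\<lambda>_. \<mu>)"
    using \<open>prob_space \<mu>\<close> by (intro prob_space_PiM) auto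
  show ?case
    by (simp add: emeasure_space_1)
next
  case (insert i I a)
  interpret \<mu>: prob_space \<mu>
    by fact
  interpret product_sigma_finite "\<lambda>_::'c. \<mu>"
    by (simp add: product_sigma_finite_def \<mu>.sigma_finite_measure_axioms)
  define k where "k = real (card I)"
  define c where "c = 13/18 - lb"
  have "c > 0" "k \<ge> 0"
    using lb by (auto simp: c_def k_def)
  have a: "18/5 * D * k + D / lb \<le> a"
    using insert by (simp add: k_def)
  have "D / lb > 0"
    using D lb by simp
  then have "a - 18/5 * D * k > 0"
    using a by linarith
  moreover have "18/5 * D * k \<ge> 0"
    using D \<open>k \<ge> 0\<close> by simp
  ultimately have "a > 0"
    by linarith
  have "(\<integral>\<^sup>+z. ennreal (exp ((norm (\<Sum>j\<in>insert i I. h (z j)))\<^sup>2 / a)) \<partial>PiM (insert i I) (\<lambda>_. \<mu>))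
      = (\<integral>\<^sup>+z. (\<integral>\<^sup>+y. ennreal (exp ((norm (\<Sum>j\<in>insert i I. h ((z(i := y)) j)))\<^sup>2 / a)) \<partial>\<mu>) \<partial>PiM I (\<lambda>_. \<mu>))"
    by (rule product_nn_integral_insert[OF insert(1,2)]) measurable
  also have "\<dots> \<le> (\<integral>\<^sup>+z. ennreal (exp (D / (c * a)))
      * ennreal (exp ((norm (\<Sum>j\<in>I. h (z j)))\<^sup>2 / (a - 18/5 * D))) \<partial>PiM I (\<lambda>_. \<mu>))"
    unfolding c_def using a[unfolded k_def]
    by (intro nn_integral_mono \<mu>.nn_integral_exp_norm_sq_sum_insert_le[OF assms(2-6) lb insert(1,2)])
  also have "\<dots> = ennreal (exp (D / (c * a)))
      * (\<integral>\<^sup>+z. ennreal (exp ((norm (\<Sum>j\<in>I. h (z j)))\<^sup>2 / (a - 18/5 * D))) \<partial>PiM I (\<lambda>_. \<mu>))"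
    by (rule nn_integral_cmult) measurable
  also have "\<dots> \<le> ennreal (exp (D / (c * a))) * ennreal (exp (D * k / (c * (a - 18/5 * D * k))))"
  proof (intro mult_left_mono)
    have shift: "a - 18/5 * D - 18/5 * D * (k - 1) = a - 18/5 * D * k"
      by (simp add: right_diff_distrib)
    then have "18/5 * D * (k - 1) + D / lb \<le> a - 18/5 * D"
      using a by linarith
    from insert.IH[OF this[unfolded k_def]]
    have "(\<integral>\<^sup>+z. ennreal (exp ((norm (\<Sum>j\<in>I. h (z j)))\<^sup>2 / (a - 18/5 * D))) \<partial>PiM I (\<lambda>_. \<mu>))
        \<le> ennreal (exp (D * k / (c * (a - 18/5 * D - 18/5 * D * (k - 1)))))"
      by (simp only: k_def c_def)
    then show "(\<integral>\<^sup>+z. ennreal (exp ((norm (\<Sum>j\<in>I. h (z j)))\<^sup>2 / (a - 18/5 * D))) \<partial>PiM I (\<lambda>_. \<mu>))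
        \<le> ennreal (exp (D * k / (c * (a - 18/5 * D * k))))"
      by (simp only: shift)
  qed simp
  also have "\<dots> \<le> ennreal (exp (D * (1 + k) / (c * (a - 18/5 * D * k))))"
  proof -
    have "D / (c * a) \<le> D / (c * (a - 18/5 * D * k))"
      using \<open>c > 0\<close> \<open>a - 18/5 * D * k > 0\<close> \<open>a > 0\<close> D \<open>k \<ge> 0\<close>
      by (intro divide_left_mono mult_left_mono mult_pos_pos) auto
    then have "D / (c * a) + D * k / (c * (a - 18/5 * D * k)) \<le> D * (1 + k) / (c * (a - 18/5 * D * k))"
      by (simp add: add_divide_distrib distrib_left)
    then show ?thesis
      by (simp add: ennreal_mult[symmetric] exp_add[symmetric])
  qed
  finally show ?case
    using insert(1,2) by (simp add: k_def c_def)
qed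

lemma (in prob_space) prob_less_le_exp:
  assumes [measurable]: "X \<in> borel_measurable M" and a: "a > 0"
    and mgf: "(\<integral>\<^sup>+\<omega>. ennreal (exp (X \<omega> / a)) \<partial>M) \<le> ennreal (exp K)"
  shows "prob {\<omega> \<in> space M. T < X \<omega>} \<le> exp (K - T / a)"
proof -
  have "emeasure M {\<omega> \<in> space M. T < X \<omega>} = (\<integral>\<^sup>+\<omega>. indicator {\<omega> \<in> space M. T < X \<omega>} \<omega> \<partial>M)"
    by simp
  also have "\<dots> \<le> (\<integral>\<^sup>+\<omega>. ennreal (exp (- T / a)) * ennreal (exp (X \<omega> / a)) \<partial>M)"
  proof (intro nn_integral_mono)
    fix \<omega>
    have "T < X \<omega> \<Longrightarrow> 1 \<le> exp (- T / a) * exp (X \<omega> / a)"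
      using a by (simp add: exp_add[symmetric] divide_right_mono diff_divide_distrib[symmetric])
    then show "indicator {\<omega> \<in> space M. T < X \<omega>} \<omega> \<le> ennreal (exp (- T / a)) * ennreal (exp (X \<omega> / a))"
      by (auto simp: indicator_def ennreal_mult[symmetric] simp flip: ennreal_1 intro!: ennreal_leI)
  qed
  also have "\<dots> = ennreal (exp (- T / a)) * (\<integral>\<^sup>+\<omega>. ennreal (exp (X \<omega> / a)) \<partial>M)"
    by (rule nn_integral_cmult) measurable
  also have "\<dots> \<le> ennreal (exp (- T / a)) * ennreal (exp K)"
    using mgf by (rule mult_left_mono) simp
  also have "\<dots> = ennreal (exp (K - T / a))"
    by (simp add: ennreal_mult[symmetric] exp_add[symmetric])
  finally show ?thesis
    by (simp add: emeasure_eq_measure)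
qed

lemma quadratic_nonpos_between:
  fixes c b d lo hi x :: real
  assumes "c \<ge> 0" "lo \<le> x" "x \<le> hi" "c * lo\<^sup>2 + b * lo + d \<le> 0" "c * hi\<^sup>2 + b * hi + d \<le> 0"
  shows "c * x\<^sup>2 + b * x + d \<le> 0"
proof -
  define s where "s = c * (lo + hi) + b"
  have "c * ((x - lo) * (hi - x)) \<ge> 0"
    using assms by (intro mult_nonneg_nonneg) auto
  moreover have "c * x\<^sup>2 + b * x + d = (s * x + d - c * lo * hi) - c * ((x - lo) * (hi - x))"
    and "s * lo + d - c * lo * hi = c * lo\<^sup>2 + b * lo + d"
    and "s * hi + d - c * lo * hi = c * hi\<^sup>2 + b * hi + d"
    by (simp_all add: s_def power2_eq_square algebra_simps)
  moreover have "s * x \<le> s * lo \<or> s * x \<le> s * hi"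
  proof (cases "s \<ge> 0")
    case True
    then show ?thesis
      using assms(3) by (intro disjI2 mult_left_mono) auto
  next
    case False
    then show ?thesis
      using assms(2) by (intro disjI1 mult_left_mono_neg) auto
  qed
  ultimately show ?thesis
    using assms(4,5) by linarith
qed

text \<open>Admissible choices of the free parameter \<open>lb\<close> of the one-step bound and of the Chernoff
  scale \<open>a = \<rho> D m\<close>: the first conditions make the iterated one-step bound applicable, the last
  one makes the resulting Chernoff exponent at most \<open>- \<Omega>\<^sup>2 / 2\<close>.\<close>
definition tail_params :: "nat \<Rightarrow> real \<Rightarrow> real \<Rightarrow> real \<Rightarrow> bool" where
  "tail_params m \<Omega> lb \<rho> \<longleftrightarrow> 0 < lb \<and> lb < 13/18 \<and> 0 < \<rho> \<and> 18/5 * (real m - 1) + 1 / lb \<le> \<rho> * real m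
     \<and> 1 / ((13/18 - lb) * (\<rho> - 18/5 * (real m - 1) / real m)) - 2 * (1 + \<Omega>)\<^sup>2 / \<rho> \<le> - \<Omega>\<^sup>2 / 2"

lemma tail_exponent_le_between:
  fixes K \<rho> lo hi x :: real
  assumes "\<rho> \<ge> 4" "lo \<le> x" "x \<le> hi"
    and "K - 2 * (1 + lo)\<^sup>2 / \<rho> \<le> - lo\<^sup>2 / 2" "K - 2 * (1 + hi)\<^sup>2 / \<rho> \<le> - hi\<^sup>2 / 2"
  shows "K - 2 * (1 + x)\<^sup>2 / \<rho> \<le> - x\<^sup>2 / 2"
proof -
  have "\<rho> > 0"
    using assms(1) by simp
  then have quadratic: "K - 2 * (1 + y)\<^sup>2 / \<rho> + y\<^sup>2 / 2 = (1/2 - 2 / \<rho>) * y\<^sup>2 + (- 4 / \<rho>) * y + (K - 2 / \<rho>)" for y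
    by (simp add: power2_eq_square field_simps)
  have "1/2 - 2 / \<rho> \<ge> 0"
    using assms(1) by (simp add: field_simps)
  then have "(1/2 - 2 / \<rho>) * x\<^sup>2 + (- 4 / \<rho>) * x + (K - 2 / \<rho>) \<le> 0"
    by (rule quadratic_nonpos_between[OF _ assms(2,3)])
      (use assms(4,5) quadratic[of lo] quadratic[of hi] in linarith)+
  then show ?thesis
    using quadratic[of x] by linarith
qed

lemma tail_exponent_le_rho_4:
  fixes K x :: real
  assumes "K - 1/2 \<le> x"
  shows "K - 2 * (1 + x)\<^sup>2 / 4 \<le> - x\<^sup>2 / 2"
proof -
  have "2 * (1 + x)\<^sup>2 / 4 = 1/2 + x + x\<^sup>2 / 2"
    by (simp add: power2_eq_square field_simps)
  then show ?thesis
    using assms by linarith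
qed

lemma tail_params_of_ge_4:
  assumes m: "real m \<ge> 4" and lb: "0 < lb" "lb < 13/18" and \<rho>: "\<rho> > 18/5"
    and "1 / lb - 18/5 \<le> 4 * (\<rho> - 18/5)"
    and "1 / ((13/18 - lb) * (\<rho> - 18/5)) - 2 * (1 + \<Omega>)\<^sup>2 / \<rho> \<le> - \<Omega>\<^sup>2 / 2"
  shows "tail_params m \<Omega> lb \<rho>"
proof -
  have "(\<rho> - 18/5) * 4 \<le> (\<rho> - 18/5) * real m"
    using \<rho> m by (intro mult_left_mono) auto
  moreover have "(\<rho> - 18/5) * real m = \<rho> * real m - 18/5 * real m"
    by (simp add: left_diff_distrib)
  moreover have "18/5 * (real m - 1) = 18/5 * real m - 18/5"
    by (simp add: right_diff_distrib)
  ultimately have "18/5 * (real m - 1) + 1 / lb \<le> \<rho> * real m"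
    using assms(5) by linarith
  moreover have "18/5 * (real m - 1) / real m \<le> 18/5"
    using m by (simp add: field_simps)
  then have "(13/18 - lb) * (\<rho> - 18/5) \<le> (13/18 - lb) * (\<rho> - 18/5 * (real m - 1) / real m)"
    and "0 < (13/18 - lb) * (\<rho> - 18/5)"
    using lb \<rho> by (auto intro!: mult_left_mono)
  then have "1 / ((13/18 - lb) * (\<rho> - 18/5 * (real m - 1) / real m)) \<le> 1 / ((13/18 - lb) * (\<rho> - 18/5))"
    by (intro frac_le) auto
  ultimately show ?thesis
    unfolding tail_params_def using lb \<rho> assms(6) by auto
qed

text \<open>The parameters below were found numerically. For each range of \<open>\<Omega>\<close> the exponent condition,
  a convex quadratic inequality in \<open>\<Omega>\<close>, is checked at the two endpoints; for \<open>\<rho> = 4\<close> it is linear.\<close>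
lemma tail_params_exist_le_3:
  assumes "1 \<le> m" "m \<le> 3" and \<Omega>: "\<Omega> \<ge> 41/100"
  shows "\<exists>lb \<rho>. tail_params m \<Omega> lb \<rho>"
proof -
  consider "m = 1" | "m = 2" "\<Omega> \<le> 1" | "m = 2" "\<Omega> \<ge> 1" | "m = 3" "\<Omega> \<le> 2" | "m = 3" "\<Omega> \<ge> 2"
    using assms by linarith
  then show ?thesis
  proof cases
    case 1
    have "tail_params m \<Omega> (1/4) 4"
      unfolding tail_params_def 1 by (simp, rule tail_exponent_le_rho_4[simplified]) (use \<Omega> in simp)
    then show ?thesis by blast
  next
    case 2
    have "tail_params m \<Omega> (9/40) (17/4)"
      unfolding tail_params_def 2
      by (simp, rule tail_exponent_le_between[of "17/4" "41/100" \<Omega> 1, simplified])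
        (use \<Omega> 2 in \<open>simp_all add: power2_eq_square\<close>)
    then show ?thesis by blast
  next
    case 3
    have "tail_params m \<Omega> (1/4) 4"
      unfolding tail_params_def 3 by (simp, rule tail_exponent_le_rho_4[simplified]) (use 3 in simp)
    then show ?thesis by blast
  next
    case 4
    have "tail_params m \<Omega> (3/20) 5"
      unfolding tail_params_def 4
      by (simp, rule tail_exponent_le_between[of 5 "41/100" \<Omega> 2, simplified])
        (use \<Omega> 4 in \<open>simp_all add: power2_eq_square\<close>)
    then show ?thesis by blast
  next
    case 5
    have "tail_params m \<Omega> (9/40) 4"
      unfolding tail_params_def 5 by (simp, rule tail_exponent_le_rho_4[simplified]) (use 5 in simp)
    then show ?thesis by blast
  qed
qed

lemma tail_params_exist_ge_4:
  assumes m: "m \<ge> 4" and \<Omega>: "\<Omega> \<ge> 41/100"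
  shows "\<exists>lb \<rho>. tail_params m \<Omega> lb \<rho>"
proof -
  have m4: "real m \<ge> 4"
    using m by simp
  consider "\<Omega> \<le> 2" | "2 \<le> \<Omega>" "\<Omega> \<le> 8" | "8 \<le> \<Omega>" "\<Omega> \<le> 26" | "26 \<le> \<Omega>"
    by linarith
  then show ?thesis
  proof cases
    case 1
    have "tail_params m \<Omega> (3/40) 7"
      by (rule tail_params_of_ge_4[OF m4])
        (simp_all, rule tail_exponent_le_between[of 7 "41/100" \<Omega> 2, simplified],
          use \<Omega> 1 in \<open>simp_all add: power2_eq_square\<close>)
    then show ?thesis by blast
  next
    case 2
    have "tail_params m \<Omega> (9/40) (19/4)"
      by (rule tail_params_of_ge_4[OF m4])
        (simp_all, rule tail_exponent_le_between[of "19/4" 2 \<Omega> 8, simplified],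
          use 2 in \<open>simp_all add: power2_eq_square\<close>)
    then show ?thesis by blast
  next
    case 3
    have "tail_params m \<Omega> (2/5) (17/4)"
      by (rule tail_params_of_ge_4[OF m4])
        (simp_all, rule tail_exponent_le_between[of "17/4" 8 \<Omega> 26, simplified],
          use 3 in \<open>simp_all add: power2_eq_square\<close>)
    then show ?thesis by blast
  next
    case 4
    have "tail_params m \<Omega> (5/8) 4"
      by (rule tail_params_of_ge_4[OF m4]) (simp_all, rule tail_exponent_le_rho_4[simplified], use 4 in simp)
    then show ?thesis by blast
  qed
qed

lemma tail_params_exist:
  assumes "m \<ge> 1" and "\<Omega> \<ge> 41/100"
  shows "\<exists>lb \<rho>. tail_params m \<Omega> lb \<rho>"
  using assms tail_params_exist_le_3 tail_params_exist_ge_4 by (cases "m \<le> 3") auto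

lemma PiM_norm_sq_sum_tail_le:
  fixes g :: "'a \<Rightarrow> 'b::euclidean_space"
  assumes \<mu>: "prob_space \<mu>" and g[measurable]: "g \<in> borel_measurable \<mu>" and "integrable \<mu> g"
    and D: "D > 0" and "(\<integral>\<^sup>+\<xi>. ennreal (exp ((norm (g \<xi> - (\<integral>\<zeta>. g \<zeta> \<partial>\<mu>)))\<^sup>2 / D)) \<partial>\<mu>) \<le> ennreal (exp 1)"
    and m: "m \<ge> 1" and \<Omega>: "\<Omega> \<ge> 41/100"
  shows "measure (PiM {1..m} (\<lambda>_. \<mu>)) {z \<in> space (PiM {1..m} (\<lambda>_. \<mu>)).
      2 * (1 + \<Omega>)\<^sup>2 * D * real m < (norm (\<Sum>j\<in>{1..m}. g (z j) - (\<integral>\<zeta>. g \<zeta> \<partial>\<mu>)))\<^sup>2} \<le> exp (- \<Omega>\<^sup>2 / 2)"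
proof -
  define h where "h = (\<lambda>\<xi>. g \<xi> - (\<integral>\<zeta>. g \<zeta> \<partial>\<mu>))"
  interpret \<mu>: prob_space \<mu>
    by fact
  have h: "h \<in> borel_measurable \<mu>" "integrable \<mu> h"
    "(\<integral>\<^sup>+\<xi>. ennreal (exp ((norm (h \<xi>))\<^sup>2 / D)) \<partial>\<mu>) \<le> ennreal (exp 1)"
    unfolding h_def using assms by (auto intro!: Bochner_Integration.integrable_diff)
  moreover have "(\<integral>\<xi>. h \<xi> \<partial>\<mu>) = 0"
    unfolding h_def using assms by (subst Bochner_Integration.integral_diff) (auto simp: \<mu>.prob_space)
  note h = h this
  note h_meas[measurable] = h(1)
  obtain lb \<rho> where "tail_params m \<Omega> lb \<rho>"
    using tail_params_exist[OF m \<Omega>] by blast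
  then have lb: "0 < lb" "lb < 13/18" and "0 < \<rho>" and admissible: "18/5 * (real m - 1) + 1 / lb \<le> \<rho> * real m"
    and exponent: "1 / ((13/18 - lb) * (\<rho> - 18/5 * (real m - 1) / real m)) - 2 * (1 + \<Omega>)\<^sup>2 / \<rho> \<le> - \<Omega>\<^sup>2 / 2"
    unfolding tail_params_def by auto
  interpret P: prob_space "PiM {1..m} (\<lambda>_. \<mu>)"
    by (intro prob_space_PiM \<mu>.prob_space_axioms)
  define a where "a = D * real m * \<rho>"
  have "real m > 0"
    using m by simp
  then have "a > 0"
    using D \<open>0 < \<rho>\<close> by (simp add: a_def)
  have "D * (18/5 * (real m - 1) + 1 / lb) \<le> D * (\<rho> * real m)"
    using admissible D by (intro mult_left_mono) auto
  then have "18/5 * D * (real (card {1..m}) - 1) + D / lb \<le> a"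
    by (simp add: a_def algebra_simps)
  note PiM_nn_integral_exp_norm_sq_sum_le[OF \<mu> h(1,2,4) D h(3) lb _ this]
  moreover have "D * real (card {1..m}) / ((13/18 - lb) * (a - 18/5 * D * (real (card {1..m}) - 1)))
      = 1 / ((13/18 - lb) * (\<rho> - 18/5 * (real m - 1) / real m))"
  proof -
    have "a - 18/5 * D * (real m - 1) = D * real m * (\<rho> - 18/5 * (real m - 1) / real m)"
      using \<open>real m > 0\<close> by (simp add: a_def field_simps)
    then show ?thesis
      using D \<open>real m > 0\<close> by simp
  qed
  ultimately have mgf: "(\<integral>\<^sup>+z. ennreal (exp ((norm (\<Sum>j\<in>{1..m}. h (z j)))\<^sup>2 / a)) \<partial>PiM {1..m} (\<lambda>_. \<mu>))
      \<le> ennreal (exp (1 / ((13/18 - lb) * (\<rho> - 18/5 * (real m - 1) / real m))))"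
    by simp
  have "P.prob {z \<in> space (PiM {1..m} (\<lambda>_. \<mu>)). 2 * (1 + \<Omega>)\<^sup>2 * D * real m < (norm (\<Sum>j\<in>{1..m}. h (z j)))\<^sup>2}
      \<le> exp (1 / ((13/18 - lb) * (\<rho> - 18/5 * (real m - 1) / real m)) - 2 * (1 + \<Omega>)\<^sup>2 * D * real m / a)"
    by (rule P.prob_less_le_exp[OF _ \<open>a > 0\<close> mgf]) measurable
  also have "2 * (1 + \<Omega>)\<^sup>2 * D * real m / a = 2 * (1 + \<Omega>)\<^sup>2 / \<rho>"
    using D \<open>real m > 0\<close> by (simp add: a_def)
  also have "exp (1 / ((13/18 - lb) * (\<rho> - 18/5 * (real m - 1) / real m)) - 2 * (1 + \<Omega>)\<^sup>2 / \<rho>)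
      \<le> exp (- \<Omega>\<^sup>2 / 2)"
    using exponent by simp
  finally show ?thesis
    by (simp add: h_def)
qed

lemma (in prob_space) distr_pair_eq_of_indep_set:
  assumes X: "random_variable S X" and Y: "random_variable T Y"
    and indep: "indep_set {X -` A \<inter> space M | A. A \<in> sets S} {Y -` B \<inter> space M | B. B \<in> sets T}"
  shows "distr M S X \<Otimes>\<^sub>M distr M T Y = distr M (S \<Otimes>\<^sub>M T) (\<lambda>\<omega>. (X \<omega>, Y \<omega>))"
proof (rule pair_measure_eqI)
  show "sigma_finite_measure (distr M S X)" "sigma_finite_measure (distr M T Y)"
    using X Y by (auto intro!: prob_space_imp_sigma_finite prob_space_distr)
  show "sets (distr M S X \<Otimes>\<^sub>M distr M T Y) = sets (distr M (S \<Otimes>\<^sub>M T) (\<lambda>\<omega>. (X \<omega>, Y \<omega>)))"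
    by (simp add: sets_pair_measure_cong[OF sets_distr sets_distr])
next
  fix A B assume "A \<in> sets (distr M S X)" "B \<in> sets (distr M T Y)"
  then have A: "A \<in> sets S" and B: "B \<in> sets T"
    by auto
  have "(\<lambda>\<omega>. (X \<omega>, Y \<omega>)) -` (A \<times> B) \<inter> space M = (X -` A \<inter> space M) \<inter> (Y -` B \<inter> space M)"
    by auto
  moreover have "prob ((X -` A \<inter> space M) \<inter> (Y -` B \<inter> space M)) = prob (X -` A \<inter> space M) * prob (Y -` B \<inter> space M)"
    using A B by (intro indep_setD[OF indep]) auto
  ultimately show "emeasure (distr M S X) A * emeasure (distr M T Y) B
      = emeasure (distr M (S \<Otimes>\<^sub>M T) (\<lambda>\<omega>. (X \<omega>, Y \<omega>))) (A \<times> B)"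
    using A B X Y by (simp add: emeasure_distr measurable_Pair emeasure_eq_measure ennreal_mult)
qed

text \<open>Conditioning on an independent variable, via Fubini for the joint law.\<close>
lemma (in prob_space) prob_indep_pair_le:
  assumes X[measurable]: "random_variable S X" and Y[measurable]: "random_variable T Y"
    and indep: "indep_set {X -` A \<inter> space M | A. A \<in> sets S} {Y -` B \<inter> space M | B. B \<in> sets T}"
    and C: "C \<in> sets (S \<Otimes>\<^sub>M T)" and "0 \<le> b"
    and slice: "\<And>\<omega>. \<omega> \<in> space M \<Longrightarrow> emeasure (distr M T Y) (Pair (X \<omega>) -` C) \<le> ennreal b"
  shows "prob {\<omega> \<in> space M. (X \<omega>, Y \<omega>) \<in> C} \<le> b"
proof -
  interpret Y: prob_space "distr M T Y"
    by (rule prob_space_distr[OF Y])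
  have C': "C \<in> sets (distr M S X \<Otimes>\<^sub>M distr M T Y)"
    using C by (simp add: sets_pair_measure_cong[OF sets_distr sets_distr])
  have "emeasure M {\<omega> \<in> space M. (X \<omega>, Y \<omega>) \<in> C} = emeasure (distr M (S \<Otimes>\<^sub>M T) (\<lambda>\<omega>. (X \<omega>, Y \<omega>))) C"
    using C by (simp add: emeasure_distr vimage_def Int_def conj_commute)
  also have "\<dots> = (\<integral>\<^sup>+v. emeasure (distr M T Y) (Pair v -` C) \<partial>distr M S X)"
    unfolding distr_pair_eq_of_indep_set[OF X Y indep, symmetric]
    by (rule Y.emeasure_pair_measure_alt[OF C'])
  also have "\<dots> = (\<integral>\<^sup>+\<omega>. emeasure (distr M T Y) (Pair (X \<omega>) -` C) \<partial>M)"
    using Y.measurable_emeasure_Pair[OF C'] by (intro nn_integral_distr) auto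
  also have "\<dots> \<le> (\<integral>\<^sup>+\<omega>. ennreal b \<partial>M)"
    using slice by (intro nn_integral_mono) auto
  also have "\<dots> = ennreal b"
    by (simp add: emeasure_space_1)
  finally show ?thesis
    using \<open>0 \<le> b\<close> by (simp add: emeasure_eq_measure)
qed

lemma finite_measure_le_of_subset:
  assumes "finite_measure M" and "A \<subseteq> B" and "B \<in> sets M"
  shows "measure M A \<le> measure M B"
proof (cases "A \<in> sets M")
  case True
  then show ?thesis
    using assms by (intro finite_measure.finite_measure_mono) auto
qed (simp add: measure_notin_sets)

lemma measurable_sum_components:
  fixes G :: "'a::euclidean_space \<Rightarrow> 'x \<Rightarrow> 'b::euclidean_space" and g :: "'a \<Rightarrow> 'b"
  assumes G[measurable]: "(\<lambda>(u, v). G u v) \<in> borel_measurable (borel \<Otimes>\<^sub>M N)"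
    and g[measurable]: "g \<in> borel_measurable borel"
  shows "(\<lambda>p. \<Sum>j\<in>I. G (fst p) (snd p j) - g (fst p)) \<in> borel_measurable (borel \<Otimes>\<^sub>M PiM I (\<lambda>_. N))"
proof (intro borel_measurable_sum borel_measurable_diff)
  fix j assume "j \<in> I"
  then have "(\<lambda>p. (fst p, snd p j)) \<in> (borel \<Otimes>\<^sub>M PiM I (\<lambda>_. N)) \<rightarrow>\<^sub>M (borel \<Otimes>\<^sub>M N)"
    by measurable
  from measurable_compose[OF this G]
  show "(\<lambda>p. G (fst p) (snd p j)) \<in> borel_measurable (borel \<Otimes>\<^sub>M PiM I (\<lambda>_. N))"
    by simp
qed measurable

lemma stoch_oracle_model_gap_le:
  assumes "stoch_oracle TYPE('n::finite) Q f \<delta> L D \<mu> fd G" and "u \<in> Q" and "v \<in> Q"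
  shows "fd u - fd v - inner (\<integral>\<xi>. G v \<xi> \<partial>\<mu>) (u - v) \<le> L / 2 * (norm (u - v))\<^sup>2 + \<delta>"
proof -
  obtain gd where gd: "\<forall>y\<in>Q.
        (\<forall>x\<in>Q. 0 \<le> f x - fd y - inner (gd y) (x - y)
               \<and> f x - fd y - inner (gd y) (x - y) \<le> L / 2 * (norm (x - y))\<^sup>2 + \<delta>)
      \<and> integrable \<mu> (G y) \<and> (\<integral>\<xi>. G y \<xi> \<partial>\<mu>) = gd y
      \<and> (\<integral>\<^sup>+\<xi>. ennreal (exp ((norm (G y \<xi> - gd y))\<^sup>2 / D)) \<partial>\<mu>) \<le> ennreal (exp 1)"
    using assms(1) unfolding stoch_oracle_def by blast
  then have "0 \<le> f u - fd u - inner (gd u) (u - u)"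
    and "f u - fd v - inner (gd v) (u - v) \<le> L / 2 * (norm (u - v))\<^sup>2 + \<delta>"
    and "(\<integral>\<xi>. G v \<xi> \<partial>\<mu>) = gd v"
    using assms(2,3) by blast+
  then show ?thesis
    by simp
qed

lemma stoch_oracle_noise:
  assumes "stoch_oracle TYPE('n::finite) Q f \<delta> L D \<mu> fd G" and "v \<in> Q"
  shows "integrable \<mu> (G v)
    \<and> (\<integral>\<^sup>+\<xi>. ennreal (exp ((norm (G v \<xi> - (\<integral>\<zeta>. G v \<zeta> \<partial>\<mu>)))\<^sup>2 / D)) \<partial>\<mu>) \<le> ennreal (exp 1)"
  using assms unfolding stoch_oracle_def by force

text \<open>The deterministic core: the model gap of the averaged gradient \<open>S / m\<close> exceeds that of
  \<open>g\<close> by at most \<open>\<bar>\<langle>S / m - g, d\<rangle>\<bar>\<close>, which Young's inequality splits using the slack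
  \<open>Lt - L \<ge> Lt / 3\<close>.\<close>
lemma large_model_gap_imp_large_noise:
  fixes S g d :: "'a::real_inner" and m :: nat
  assumes m: "m \<ge> 1" and L: "L > 0" and Lt: "3/2 * L \<le> Lt" and D: "D > 0"
    and model: "a - inner g d \<le> L / 2 * (norm d)\<^sup>2 + \<delta>"
    and gap: "(1 + 2 * \<Omega> + \<Omega>\<^sup>2) * (3 * D / (Lt * real m)) + Lt / 2 * (norm d)\<^sup>2 + \<delta>
      < a - inner ((1 / real m) *\<^sub>R S) d"
  shows "2 * (1 + \<Omega>)\<^sup>2 * D * real m < (norm (S - real m *\<^sub>R g))\<^sup>2"
proof -
  define \<Delta> where "\<Delta> = (1 / real m) *\<^sub>R S - g"
  define c where "c = Lt - L"
  have "real m > 0" "Lt > 0" "c > 0" "Lt \<le> 3 * c"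
    using m L Lt by (auto simp: c_def)
  have "1 + 2 * \<Omega> + \<Omega>\<^sup>2 = (1 + \<Omega>)\<^sup>2"
    by (simp add: power2_eq_square algebra_simps)
  moreover have "inner ((1 / real m) *\<^sub>R S) d = inner g d + inner \<Delta> d"
    by (simp add: \<Delta>_def inner_diff_left)
  ultimately have "(1 + \<Omega>)\<^sup>2 * (3 * D / (Lt * real m)) + (Lt / 2 * (norm d)\<^sup>2 - L / 2 * (norm d)\<^sup>2)
      < - inner \<Delta> d"
    using model gap by (simp only:)
  also have "\<dots> \<le> norm \<Delta> * norm d"
    using Cauchy_Schwarz_ineq2[of \<Delta> d] by linarith
  also have "\<dots> \<le> (norm \<Delta>)\<^sup>2 / (2 * c) + (Lt / 2 * (norm d)\<^sup>2 - L / 2 * (norm d)\<^sup>2)"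
    using mult_le_sq_div_add[OF \<open>c > 0\<close>, of "norm \<Delta>" "norm d"]
    by (simp add: c_def left_diff_distrib diff_divide_distrib)
  finally have "(1 + \<Omega>)\<^sup>2 * (3 * D / (Lt * real m)) < (norm \<Delta>)\<^sup>2 / (2 * c)"
    by simp
  also have "\<dots> \<le> 3 * (norm \<Delta>)\<^sup>2 / (2 * Lt)"
  proof -
    have "Lt * (norm \<Delta>)\<^sup>2 \<le> (3 * c) * (norm \<Delta>)\<^sup>2"
      using \<open>Lt \<le> 3 * c\<close> by (intro mult_right_mono) auto
    then show ?thesis
      using \<open>c > 0\<close> \<open>Lt > 0\<close> by (simp add: field_simps)
  qed
  finally have "2 * (1 + \<Omega>)\<^sup>2 * D < real m * (norm \<Delta>)\<^sup>2"
    using \<open>Lt > 0\<close> \<open>real m > 0\<close> by (simp add: field_simps)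
  then have "2 * (1 + \<Omega>)\<^sup>2 * D * real m < (real m)\<^sup>2 * (norm \<Delta>)\<^sup>2"
    using \<open>real m > 0\<close> by (simp add: power2_eq_square)
  moreover have "S - real m *\<^sub>R g = real m *\<^sub>R \<Delta>"
    using \<open>real m > 0\<close> by (simp add: \<Delta>_def algebra_simps)
  ultimately show ?thesis
    by (simp add: power_mult_distrib)
qed

lemma prob_noise_sum_tail_le:
  fixes M :: "'w measure" and N \<mu> :: "'x measure" and Q :: "'a::euclidean_space set"
    and G :: "'a \<Rightarrow> 'x \<Rightarrow> 'b::euclidean_space" and \<xi> :: "nat \<Rightarrow> 'w \<Rightarrow> 'x" and y :: "'w \<Rightarrow> 'a"
  assumes "prob_space M" and "prob_space \<mu>" and sets_\<mu>: "sets \<mu> = sets N"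
    and G_meas: "(\<lambda>(u, v). G u v) \<in> borel_measurable (borel \<Otimes>\<^sub>M N)"
    and noise: "\<And>v. v \<in> Q \<Longrightarrow> integrable \<mu> (G v)
      \<and> (\<integral>\<^sup>+\<zeta>. ennreal (exp ((norm (G v \<zeta> - (\<integral>\<zeta>. G v \<zeta> \<partial>\<mu>)))\<^sup>2 / D)) \<partial>\<mu>) \<le> ennreal (exp 1)"
    and D: "D > 0" and m: "m \<ge> 1" and \<Omega>: "\<Omega> \<ge> 41/100"
    and xi_meas: "\<And>j. j \<in> {1..m} \<Longrightarrow> \<xi> j \<in> M \<rightarrow>\<^sub>M N"
    and xi_law: "\<And>j. j \<in> {1..m} \<Longrightarrow> distr M N (\<xi> j) = \<mu>"
    and xi_indep: "prob_space.indep_vars M (\<lambda>_. N) \<xi> {1..m}"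
    and y_meas: "y \<in> borel_measurable M"
    and y_indep: "prob_space.indep_set M {y -` A \<inter> space M | A. A \<in> sets borel}
                    {(\<lambda>\<omega>. restrict (\<lambda>j. \<xi> j \<omega>) {1..m}) -` B \<inter> space M
                       | B. B \<in> sets (Pi\<^sub>M {1..m} (\<lambda>_. N))}"
    and yQ: "\<And>\<omega>. \<omega> \<in> space M \<Longrightarrow> y \<omega> \<in> Q"
  defines "B \<equiv> {\<omega> \<in> space M. 2 * (1 + \<Omega>)\<^sup>2 * D * real m
      < (norm (\<Sum>j\<in>{1..m}. G (y \<omega>) (\<xi> j \<omega>) - (\<integral>\<zeta>. G (y \<omega>) \<zeta> \<partial>\<mu>)))\<^sup>2}"
  shows "B \<in> sets M" and "measure M B \<le> exp (- \<Omega>\<^sup>2 / 2)"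
proof -
  interpret M: prob_space M
    by fact
  interpret \<mu>: prob_space \<mu>
    by fact
  define g where "g v = (\<integral>\<zeta>. G v \<zeta> \<partial>\<mu>)" for v
  define Z where "Z = (\<lambda>\<omega>. \<lambda>j\<in>{1..m}. \<xi> j \<omega>)"
  define PN where "PN = PiM {1..m} (\<lambda>_. N)"
  define C where "C = {p \<in> space (borel \<Otimes>\<^sub>M PN).
      2 * (1 + \<Omega>)\<^sup>2 * D * real m < (norm (\<Sum>j\<in>{1..m}. G (fst p) (snd p j) - g (fst p)))\<^sup>2}"
  have G_meas_\<mu>: "(\<lambda>(u, v). G u v) \<in> borel_measurable (borel \<Otimes>\<^sub>M \<mu>)"
    using G_meas by (subst measurable_cong_sets[OF sets_pair_measure_cong[OF refl sets_\<mu>] refl])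
  then have "g \<in> borel_measurable borel"
    unfolding g_def by (intro \<mu>.borel_measurable_lebesgue_integral) simp
  from measurable_sum_components[OF G_meas this]
  have C_sets: "C \<in> sets (borel \<Otimes>\<^sub>M PN)"
    unfolding C_def PN_def by measurable
  have Z_meas: "Z \<in> M \<rightarrow>\<^sub>M PN"
    unfolding Z_def PN_def using xi_meas by (intro measurable_restrict) auto
  have "(\<Sum>j\<in>{1..m}. G (y \<omega>) (Z \<omega> j) - g (y \<omega>)) = (\<Sum>j\<in>{1..m}. G (y \<omega>) (\<xi> j \<omega>) - g (y \<omega>))" for \<omega>
    by (intro sum.cong) (auto simp: Z_def)
  then have B_eq: "B = {\<omega> \<in> space M. (y \<omega>, Z \<omega>) \<in> C}"
    using measurable_space[OF measurable_Pair[OF y_meas Z_meas]] by (auto simp: B_def C_def g_def)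
  show "B \<in> sets M"
    unfolding B_eq using C_sets measurable_Pair[OF y_meas Z_meas] by measurable
  have indep: "M.indep_set {y -` A \<inter> space M | A. A \<in> sets borel} {Z -` B \<inter> space M | B. B \<in> sets PN}"
    using y_indep by (simp add: Z_def PN_def)
  have law_Z: "distr M PN Z = PiM {1..m} (\<lambda>_. \<mu>)"
  proof -
    have "distr M PN Z = (\<Pi>\<^sub>M j\<in>{1..m}. distr M N (\<xi> j))"
      using M.indep_vars_iff_distr_eq_PiM'[where I="{1..m}" and M'="\<lambda>_. N" and X=\<xi>] xi_indep xi_meas m
      by (simp add: Z_def PN_def)
    also have "\<dots> = PiM {1..m} (\<lambda>_. \<mu>)"
      by (intro PiM_cong) (auto simp: xi_law)
    finally show ?thesis .
  qed
  interpret P: prob_space "PiM {1..m} (\<lambda>_. \<mu>)"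
    by (intro prob_space_PiM \<mu>.prob_space_axioms)
  show "measure M B \<le> exp (- \<Omega>\<^sup>2 / 2)"
    unfolding B_eq
  proof (rule M.prob_indep_pair_le[OF y_meas Z_meas indep C_sets])
    fix \<omega> assume "\<omega> \<in> space M"
    have "(\<lambda>\<zeta>. (y \<omega>, \<zeta>)) \<in> \<mu> \<rightarrow>\<^sub>M borel \<Otimes>\<^sub>M \<mu>"
      by measurable
    from measurable_compose[OF this G_meas_\<mu>]
    have "G (y \<omega>) \<in> borel_measurable \<mu>"
      by simp
    moreover have "integrable \<mu> (G (y \<omega>))"
      and "(\<integral>\<^sup>+\<zeta>. ennreal (exp ((norm (G (y \<omega>) \<zeta> - (\<integral>\<zeta>. G (y \<omega>) \<zeta> \<partial>\<mu>)))\<^sup>2 / D)) \<partial>\<mu>) \<le> ennreal (exp 1)"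
      using noise[OF yQ[OF \<open>\<omega> \<in> space M\<close>]] by auto
    ultimately have "measure (PiM {1..m} (\<lambda>_. \<mu>)) {z \<in> space (PiM {1..m} (\<lambda>_. \<mu>)).
        2 * (1 + \<Omega>)\<^sup>2 * D * real m < (norm (\<Sum>j\<in>{1..m}. G (y \<omega>) (z j) - g (y \<omega>)))\<^sup>2} \<le> exp (- \<Omega>\<^sup>2 / 2)"
      unfolding g_def by (intro PiM_norm_sq_sum_tail_le[OF \<mu>.prob_space_axioms _ _ D _ m \<Omega>])
    moreover have "Pair (y \<omega>) -` C = {z \<in> space (PiM {1..m} (\<lambda>_. \<mu>)).
        2 * (1 + \<Omega>)\<^sup>2 * D * real m < (norm (\<Sum>j\<in>{1..m}. G (y \<omega>) (z j) - g (y \<omega>)))\<^sup>2}"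
      using sets_eq_imp_space_eq[OF sets_PiM_cong[OF refl sets_\<mu>]]
      by (auto simp: C_def PN_def space_pair_measure)
    ultimately show "emeasure (distr M PN Z) (Pair (y \<omega>) -` C) \<le> ennreal (exp (- \<Omega>\<^sup>2 / 2))"
      unfolding law_Z P.emeasure_eq_measure by (intro ennreal_leI) simp
  qed simp
qed

theorem corollary2:
  fixes M :: "'w measure" and N :: "'x measure" and \<mu> :: "'x measure"
    and Q :: "(real^'n) set" and f fd :: "real^'n \<Rightarrow> real"
    and G :: "real^'n \<Rightarrow> 'x \<Rightarrow> real^'n"
    and \<delta> L D \<Omega> :: real and m :: nat
    and \<xi> :: "nat \<Rightarrow> 'w \<Rightarrow> 'x" and x y :: "'w \<Rightarrow> real^'n" and Lt :: "'w \<Rightarrow> real"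
  assumes "prob_space M"
    and "closed Q" and "convex Q"
    and "L > 0" and "D > 0"
    and "prob_space \<mu>" and "sets \<mu> = sets N"
    and orc: "stoch_oracle TYPE('n) Q f \<delta> L D \<mu> fd G"
    and G_meas: "(\<lambda>(u, v). G u v) \<in> borel_measurable (borel \<Otimes>\<^sub>M N)"
    and "m \<ge> 1"
    and xi_meas: "\<And>j. j \<in> {1..m} \<Longrightarrow> \<xi> j \<in> M \<rightarrow>\<^sub>M N"
    and xi_law: "\<And>j. j \<in> {1..m} \<Longrightarrow> distr M N (\<xi> j) = \<mu>"
    and xi_indep: "prob_space.indep_vars M (\<lambda>_. N) \<xi> {1..m}"
    and x_meas: "x \<in> borel_measurable M" and y_meas: "y \<in> borel_measurable M"
    and Lt_meas: "Lt \<in> borel_measurable M"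
    and y_indep: "prob_space.indep_set M {y -` A \<inter> space M | A. A \<in> sets borel}
                    {(\<lambda>\<omega>. restrict (\<lambda>j. \<xi> j \<omega>) {1..m}) -` B \<inter> space M
                       | B. B \<in> sets (Pi\<^sub>M {1..m} (\<lambda>_. N))}"
    and xQ: "\<And>\<omega>. \<omega> \<in> space M \<Longrightarrow> x \<omega> \<in> Q"
    and yQ: "\<And>\<omega>. \<omega> \<in> space M \<Longrightarrow> y \<omega> \<in> Q"
    and Lt_ge: "\<And>\<omega>. \<omega> \<in> space M \<Longrightarrow> Lt \<omega> \<ge> 3 / 2 * L"
    and "\<Omega> \<ge> sqrt 2 - 1"
  shows "measure M {\<omega> \<in> space M.
            fd (x \<omega>) - fd (y \<omega>)
              - inner ((1 / real m) *\<^sub>R (\<Sum>j=1..m. G (y \<omega>) (\<xi> j \<omega>))) (x \<omega> - y \<omega>)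
            > (1 + 2 * \<Omega> + \<Omega>\<^sup>2) * (3 * D / (Lt \<omega> * real m))
              + Lt \<omega> / 2 * (norm (x \<omega> - y \<omega>))\<^sup>2 + \<delta>}
         \<le> exp (- \<Omega>\<^sup>2 / 2)"
proof -
  define B where "B = {\<omega> \<in> space M. 2 * (1 + \<Omega>)\<^sup>2 * D * real m
      < (norm (\<Sum>j\<in>{1..m}. G (y \<omega>) (\<xi> j \<omega>) - (\<integral>\<zeta>. G (y \<omega>) \<zeta> \<partial>\<mu>)))\<^sup>2}"
  have "7071/5000 \<le> sqrt (2::real)"
    by (rule real_le_rsqrt) (simp add: power2_eq_square)
  then have "\<Omega> \<ge> 41/100"
    using \<open>\<Omega> \<ge> sqrt 2 - 1\<close> by linarith
  note tail = prob_noise_sum_tail_le[OF \<open>prob_space M\<close> \<open>prob_space \<mu>\<close> \<open>sets \<mu> = sets N\<close> G_meas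
      stoch_oracle_noise[OF orc] \<open>D > 0\<close> \<open>m \<ge> 1\<close> this xi_meas xi_law xi_indep y_meas y_indep yQ]
  then have "B \<in> sets M" "measure M B \<le> exp (- \<Omega>\<^sup>2 / 2)"
    unfolding B_def by blast+
  moreover have "{\<omega> \<in> space M. fd (x \<omega>) - fd (y \<omega>)
              - inner ((1 / real m) *\<^sub>R (\<Sum>j=1..m. G (y \<omega>) (\<xi> j \<omega>))) (x \<omega> - y \<omega>)
            > (1 + 2 * \<Omega> + \<Omega>\<^sup>2) * (3 * D / (Lt \<omega> * real m))
              + Lt \<omega> / 2 * (norm (x \<omega> - y \<omega>))\<^sup>2 + \<delta>} \<subseteq> B"
  proof safe
    fix \<omega> assume \<omega>: "\<omega> \<in> space M"
      and gap: "(1 + 2 * \<Omega> + \<Omega>\<^sup>2) * (3 * D / (Lt \<omega> * real m)) + Lt \<omega> / 2 * (norm (x \<omega> - y \<omega>))\<^sup>2 + \<delta>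
        < fd (x \<omega>) - fd (y \<omega>) - inner ((1 / real m) *\<^sub>R (\<Sum>j=1..m. G (y \<omega>) (\<xi> j \<omega>))) (x \<omega> - y \<omega>)"
    from large_model_gap_imp_large_noise[OF \<open>m \<ge> 1\<close> \<open>L > 0\<close> Lt_ge[OF \<omega>] \<open>D > 0\<close>
        stoch_oracle_model_gap_le[OF orc xQ[OF \<omega>] yQ[OF \<omega>]] gap]
    show "\<omega> \<in> B"
      using \<omega> by (simp add: B_def sum_subtractf scaleR_conv_of_real)
  qed
  ultimately show ?thesis
    using finite_measure_le_of_subset[of M] prob_space.finite_measure[OF \<open>prob_space M\<close>]
    by (meson order_trans)
qed

end
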